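(* Let $\mathcal{T}$ be a single-elimination tournament with at least $2$ vertices and $\widehat{B}$ a bracket of $\mathcal{T}$. Let $a,b$ be distinct players such that the unique out-neighbour $x_a$ of $a$ satisfies $b\in\{\widehat{B}(v):v\in N^-(x_a)\}$. Then for any brackets $B,B'$ and any scoring system $\sigma$ with $\mathrm{score}_\sigma(\widehat{B}_a,B)=\mathrm{score}_\sigma(\widehat{B}_a,B')$ and $\mathrm{score}_\sigma(\widehat{B}_b,B)=\mathrm{score}_\sigma(\widehat{B}_b,B')$, we have for all $x\in M(\mathcal{T})$ that $B(x)=a$ if and only if $B'(x)=a$.
   Context: A single-elimination tournament is a finite directed graph $\mathcal{T}$ such that: (a) $\mathcal{T}$ has exactly one sink (vertex with no out-neighbours); (b) every non-sink vertex has exactly one out-neighbour; (c) $\mathcal{T}$ has no directed cycles; (d) $|N^-(v)|\ne 1$ for every vertex $v$, where $N^-(v)$ denotes the set of in-neighbours of $v$. The players $P(\mathcal{T})$ are the sources and the matches are $M(\mathcal{T})=V(\mathcal{T})\setminus P(\mathcal{T})$. For a vertex $u$, $P(u)$ is the set of players $c$ for which there is a directed walk from $c$ to $u$ (length $0$ allowed). A bracket is a function $B:V(\mathcal{T})\to P(\mathcal{T})$ with $B(c)=c$ for every player $c$ and $B(x)\in\{B(u):u\in N^-(x)\}$ for every match $x$. For a bracket $\widehat{B}$ and player $c$, $\widehat{B}_c$ is the bracket with $\widehat{B}_c(u)=c$ if $c\in P(u)$ and $\widehat{B}_c(u)=\widehat{B}(u)$ otherwise. A scoring system is any function $\sigma:M(\mathcal{T})\to\mathbb{R}_{>0}$,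 and $\mathrm{score}_\sigma(B,B')=\sum_{x\in M(\mathcal{T}):\,B(x)=B'(x)}\sigma(x)$. *)

theory Defs
  imports Complex_Main
begin

definition out_nbrs :: "'v rel \<Rightarrow> 'v \<Rightarrow> 'v set" where
  "out_nbrs E v = {w. (v, w) \<in> E}"

definition in_nbrs :: "'v rel \<Rightarrow> 'v \<Rightarrow> 'v set" where
  "in_nbrs E v = {u. (u, v) \<in> E}"

definition single_elim_tournament :: "'v set \<Rightarrow> 'v rel \<Rightarrow> bool" where
  "single_elim_tournament V E \<longleftrightarrow>
     finite V \<and> E \<subseteq> V \<times> V \<and>
     (\<exists>!s. s \<in> V \<and> out_nbrs E s = {}) \<and>
     (\<forall>v\<in>V. out_nbrs E v \<noteq> {} \<longrightarrow> card (out_nbrs E v) = 1) \<and>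
     (\<forall>v\<in>V. (v, v) \<notin> E\<^sup>+) \<and>
     (\<forall>v\<in>V. card (in_nbrs E v) \<noteq> 1)"

definition players :: "'v set \<Rightarrow> 'v rel \<Rightarrow> 'v set" where
  "players V E = {v \<in> V. in_nbrs E v = {}}"

definition matches :: "'v set \<Rightarrow> 'v rel \<Rightarrow> 'v set" where
  "matches V E = V - players V E"

definition players_below :: "'v set \<Rightarrow> 'v rel \<Rightarrow> 'v \<Rightarrow> 'v set" where
  "players_below V E u = {c \<in> players V E. (c, u) \<in> E\<^sup>*}"

definition is_bracket :: "'v set \<Rightarrow> 'v rel \<Rightarrow> ('v \<Rightarrow> 'v) \<Rightarrow> bool" where
  "is_bracket V E B \<longleftrightarrow>
     (\<forall>c\<in>players V E. B c = c) \<and>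
     (\<forall>x\<in>matches V E. B x \<in> B ` in_nbrs E x)"

definition bracket_with :: "'v set \<Rightarrow> 'v rel \<Rightarrow> ('v \<Rightarrow> 'v) \<Rightarrow> 'v \<Rightarrow> ('v \<Rightarrow> 'v)" where
  "bracket_with V E B c = (\<lambda>u. if c \<in> players_below V E u then c else B u)"

definition score :: "'v set \<Rightarrow> 'v rel \<Rightarrow> ('v \<Rightarrow> real) \<Rightarrow> ('v \<Rightarrow> 'v) \<Rightarrow> ('v \<Rightarrow> 'v) \<Rightarrow> real" where
  "score V E \<sigma> B B' = (\<Sum>x\<in>{x \<in> matches V E. B x = B' x}. \<sigma> x)"

end

theory Submission
  imports Defs
begin

text \<open>
  Let A be the path of matches from xa to the final. The brackets hat-B_a and hat-B_b
  agree with hat-B off A (for hat-B_b because b wins the in-neighbour v of xa in hat-B,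
  hence already wins there every match above b that is off A) and pick a resp. b on A.
  So the difference of the scores of B against hat-B_a and hat-B_b is
  \<sigma>{x \<in> A. B x = a} - \<sigma>{x \<in> A. B x = b}, and likewise for B'. The matches of A won
  by a player form an initial segment of A, so these sets are nested for B and B', and
  a and b cannot both win on A, as both would have to win xa. With \<sigma> positive the
  difference therefore determines the segment won by a, and a wins only matches on A.
\<close>

lemma single_elim_tournament_edges_subset:
  "single_elim_tournament V E \<Longrightarrow> E \<subseteq> V \<times> V"
  unfolding single_elim_tournament_def by blast

lemma single_elim_tournament_single_valued:
  assumes T: "single_elim_tournament V E"
  shows "single_valued E"
proof (rule single_valuedI)
  fix x y z assume xy: "(x, y) \<in> E" and xz: "(x, z) \<in> E"
  then have "x \<in> V" "out_nbrs E x \<noteq> {}"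
    using single_elim_tournament_edges_subset[OF T] by (auto simp: out_nbrs_def)
  then have "card (out_nbrs E x) = 1"
    using T unfolding single_elim_tournament_def by blast
  moreover have "y \<in> out_nbrs E x" "z \<in> out_nbrs E x"
    using xy xz by (auto simp: out_nbrs_def)
  ultimately show "y = z" by (auto simp: card_Suc_eq)
qed

lemma single_elim_tournament_acyclic:
  assumes T: "single_elim_tournament V E"
  shows "acyclic E"
  unfolding acyclic_def
proof
  fix x show "(x, x) \<notin> E\<^sup>+"
  proof
    assume cycle: "(x, x) \<in> E\<^sup>+"
    then have "x \<in> V"
      using trancl_subset_Sigma[OF single_elim_tournament_edges_subset[OF T]] by blast
    then show False using cycle T unfolding single_elim_tournament_def by blast
  qed
qed

lemma single_elim_tournament_wf:
  assumes T: "single_elim_tournament V E"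
  shows "wf E"
proof (rule finite_acyclic_wf)
  have "finite V" using T unfolding single_elim_tournament_def by blast
  then show "finite E"
    using single_elim_tournament_edges_subset[OF T] by (meson finite_SigmaI finite_subset)
  show "acyclic E" using single_elim_tournament_acyclic[OF T] .
qed

lemma single_valued_trancl_through_successor:
  assumes "single_valued r" "(v, w) \<in> r" "(v, x) \<in> r\<^sup>+"
  shows "(w, x) \<in> r\<^sup>*"
  using assms by (metis single_valuedD tranclD)

lemma single_elim_tournament_in_nbrs_reachable_eq:
  assumes T: "single_elim_tournament V E"
    and cw: "(c, w) \<in> E\<^sup>*" and cy: "(c, y) \<in> E\<^sup>*"
    and wz: "(w, z) \<in> E" and yz: "(y, z) \<in> E"
  shows "w = y"
proof -
  have sv: "single_valued E" using single_elim_tournament_single_valued[OF T] .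
  have no_path: "(y', w') \<notin> E\<^sup>+" if "(y', z) \<in> E" "(w', z) \<in> E" for y' w'
  proof
    assume "(y', w') \<in> E\<^sup>+"
    then have "(z, w') \<in> E\<^sup>*" by (rule single_valued_trancl_through_successor[OF sv that(1)])
    then have "(z, z) \<in> E\<^sup>+" using that(2) by (rule rtrancl_into_trancl1)
    then show False using single_elim_tournament_acyclic[OF T] by (simp add: acyclic_def)
  qed
  have "(y, w) \<in> E\<^sup>* \<or> (w, y) \<in> E\<^sup>*"
    using single_valued_confluent[OF sv cy cw] .
  then show ?thesis
    using no_path[OF yz wz] no_path[OF wz yz] by (metis rtranclD)
qed

lemma trancl_target_in_matches:
  assumes "E \<subseteq> V \<times> V" "(v, x) \<in> E\<^sup>+"
  shows "x \<in> matches V E"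
  using assms by (auto simp: matches_def players_def in_nbrs_def elim: tranclE)

lemma single_elim_tournament_finite_matches:
  "single_elim_tournament V E \<Longrightarrow> finite (matches V E)"
  by (simp add: single_elim_tournament_def matches_def)

lemma single_elim_tournament_path_in_matches:
  assumes T: "single_elim_tournament V E" and vw: "(v, w) \<in> E"
  shows "E\<^sup>* `` {w} \<subseteq> matches V E"
  using trancl_target_in_matches[OF single_elim_tournament_edges_subset[OF T]] vw
  by (auto intro: rtrancl_into_trancl2)

lemma bracket_in_players_below:
  assumes T: "single_elim_tournament V E" and B: "is_bracket V E B"
  shows "u \<in> V \<Longrightarrow> B u \<in> players_below V E u"
proof (induction u rule: wf_induct_rule[OF single_elim_tournament_wf[OF T]])
  case (1 u)
  show ?case
  proof (cases "u \<in> players V E")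
    case True
    then show ?thesis using B unfolding is_bracket_def players_below_def by auto
  next
    case False
    then have "u \<in> matches V E" using 1 by (auto simp: matches_def)
    then obtain w where wu: "(w, u) \<in> E" and "B u = B w"
      using B unfolding is_bracket_def by (auto simp: in_nbrs_def)
    moreover have "B w \<in> players_below V E w"
      using 1 wu single_elim_tournament_edges_subset[OF T] by blast
    ultimately show ?thesis unfolding players_below_def by (auto intro: rtrancl_into_rtrancl)
  qed
qed

lemma bracket_winner_on_path:
  assumes T: "single_elim_tournament V E" and B: "is_bracket V E B"
    and yx: "(y, x) \<in> E\<^sup>*" and cy: "(c, y) \<in> E\<^sup>*" and Bx: "B x = c"
  shows "B y = c"
  using yx Bx
proof (induction rule: rtrancl_induct)
  case base
  then show ?case by simp
next
  case (step x' x)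
  have EV: "E \<subseteq> V \<times> V" using single_elim_tournament_edges_subset[OF T] .
  then have "x \<in> matches V E" using step(2) by (blast intro: trancl_target_in_matches)
  then obtain w where wx: "(w, x) \<in> E" and Bw: "B x = B w"
    using B unfolding is_bracket_def by (auto simp: in_nbrs_def)
  then have "B w \<in> players_below V E w" using bracket_in_players_below[OF T B] EV by blast
  then have "(c, w) \<in> E\<^sup>*" using Bw step(4) unfolding players_below_def by auto
  moreover have "(c, x') \<in> E\<^sup>*" using cy step(1) by (rule rtrancl_trans)
  ultimately have "w = x'"
    using single_elim_tournament_in_nbrs_reachable_eq[OF T _ _ wx step(2)] by blast
  then show ?case using step Bw by simp
qed

lemma bracket_winner_reaches_through_successor:
  assumes T: "single_elim_tournament V E" and C: "is_bracket V E C"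
    and x: "x \<in> matches V E" and w: "(C x, w) \<in> E"
  shows "(w, x) \<in> E\<^sup>*"
proof -
  have "C x \<in> players_below V E x"
    using bracket_in_players_below[OF T C] x by (simp add: matches_def)
  then have "(C x, x) \<in> E\<^sup>*" "C x \<noteq> x"
    using x by (auto simp: players_below_def matches_def)
  then have "(C x, x) \<in> E\<^sup>+" by (simp add: rtrancl_eq_or_trancl)
  with single_elim_tournament_single_valued[OF T] w show ?thesis
    by (rule single_valued_trancl_through_successor)
qed

text \<open>A match above c but not above w lies between c and v, so c wins it in Bh already.\<close>

lemma bracket_with_eq_override:
  assumes T: "single_elim_tournament V E" and Bh: "is_bracket V E Bh"
    and c: "c \<in> players V E" and vw: "(v, w) \<in> E" and Bv: "Bh v = c"
  shows "bracket_with V E Bh c = (\<lambda>x. if x \<in> E\<^sup>* `` {w} then c else Bh x)"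
proof
  fix x
  have sv: "single_valued E" using single_elim_tournament_single_valued[OF T] .
  have "v \<in> V" using vw single_elim_tournament_edges_subset[OF T] by blast
  then have cv: "(c, v) \<in> E\<^sup>*"
    using bracket_in_players_below[OF T Bh] Bv by (auto simp: players_below_def)
  have off_path: "Bh x = c" if cx: "(c, x) \<in> E\<^sup>*" and wx: "(w, x) \<notin> E\<^sup>*"
  proof -
    have "(v, x) \<notin> E\<^sup>+" using wx single_valued_trancl_through_successor[OF sv vw] by blast
    then have "(x, v) \<in> E\<^sup>*"
      using single_valued_confluent[OF sv cv cx] by (metis rtranclD rtrancl.rtrancl_refl)
    then show ?thesis using bracket_winner_on_path[OF T Bh _ cx Bv] by blast
  qed
  have on_path: "(c, x) \<in> E\<^sup>*" if "(w, x) \<in> E\<^sup>*"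
    using cv vw that by (meson rtrancl_into_rtrancl rtrancl_trans)
  show "bracket_with V E Bh c x = (if x \<in> E\<^sup>* `` {w} then c else Bh x)"
    using c on_path off_path unfolding bracket_with_def players_below_def by auto
qed

lemma score_override_split:
  assumes "finite (matches V E)" "A \<subseteq> matches V E"
  shows "score V E \<sigma> (\<lambda>x. if x \<in> A then c else D x) C
       = sum \<sigma> {x \<in> matches V E - A. D x = C x} + sum \<sigma> {x \<in> A. C x = c}"
proof -
  have "{x \<in> matches V E. (if x \<in> A then c else D x) = C x}
      = {x \<in> matches V E - A. D x = C x} \<union> {x \<in> A. C x = c}"
    using assms(2) by auto
  then show ?thesis
    unfolding score_def using assms
    by (subst sum.union_disjoint[symmetric]) (auto intro: finite_subset)
qed

lemma bracket_wins_above_comparable: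
  assumes T: "single_elim_tournament V E"
    and C: "is_bracket V E C" and C': "is_bracket V E C'" and cw: "(c, w) \<in> E\<^sup>*"
  shows "{x \<in> E\<^sup>* `` {w}. C x = c} \<subseteq> {x \<in> E\<^sup>* `` {w}. C' x = c}
       \<or> {x \<in> E\<^sup>* `` {w}. C' x = c} \<subseteq> {x \<in> E\<^sup>* `` {w}. C x = c}"
proof (rule ccontr)
  assume "\<not> ?thesis"
  then obtain x y where x: "(w, x) \<in> E\<^sup>*" "C x = c" "C' x \<noteq> c"
    and y: "(w, y) \<in> E\<^sup>*" "C' y = c" "C y \<noteq> c"
    by blast
  have cx: "(c, x) \<in> E\<^sup>*" and cy: "(c, y) \<in> E\<^sup>*"
    using cw x(1) y(1) by (meson rtrancl_trans)+
  from single_valued_confluent[OF single_elim_tournament_single_valued[OF T] x(1) y(1)]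
  show False
  proof
    assume "(x, y) \<in> E\<^sup>*"
    then show False using bracket_winner_on_path[OF T C' _ cx y(2)] x(3) by blast
  next
    assume "(y, x) \<in> E\<^sup>*"
    then show False using bracket_winner_on_path[OF T C _ cy x(2)] y(3) by blast
  qed
qed

lemma bracket_wins_above_exclusive:
  assumes T: "single_elim_tournament V E" and C: "is_bracket V E C"
    and cw: "(c, w) \<in> E\<^sup>*" and dw: "(d, w) \<in> E\<^sup>*" and cd: "c \<noteq> d"
  shows "{x \<in> E\<^sup>* `` {w}. C x = c} = {} \<or> {x \<in> E\<^sup>* `` {w}. C x = d} = {}"
proof (rule ccontr)
  assume "\<not> ?thesis"
  then obtain x y where x: "(w, x) \<in> E\<^sup>*" "C x = c" and y: "(w, y) \<in> E\<^sup>*" "C y = d"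
    by blast
  have "C w = c" using bracket_winner_on_path[OF T C x(1) cw x(2)] .
  moreover have "C w = d" using bracket_winner_on_path[OF T C y(1) dw y(2)] .
  ultimately show False using cd by simp
qed

text \<open>If S \<subset> S' then T' = {}, and the balance would force sum \<sigma> T < 0.\<close>

lemma nested_eq_of_sum_diff_eq:
  fixes \<sigma> :: "'a \<Rightarrow> real"
  assumes A: "finite A" "\<forall>x\<in>A. \<sigma> x > 0"
    and subsets: "S \<subseteq> A" "S' \<subseteq> A" "T \<subseteq> A" "T' \<subseteq> A"
    and nested: "S \<subseteq> S' \<or> S' \<subseteq> S"
    and excl: "S = {} \<or> T = {}" "S' = {} \<or> T' = {}"
    and balance: "sum \<sigma> S - sum \<sigma> T = sum \<sigma> S' - sum \<sigma> T'"
  shows "S = S'"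
proof -
  have nonneg: "sum \<sigma> U \<ge> 0" if "U \<subseteq> A" for U
    using A that by (intro sum_nonneg) (auto intro: less_imp_le)
  have less: "sum \<sigma> U < sum \<sigma> U'" if psub: "U \<subset> U'" and sub: "U' \<subseteq> A" for U U'
  proof -
    obtain u where "u \<in> U' - U" using psub by blast
    moreover have "finite U'" "\<forall>x\<in>U'. \<sigma> x > 0" using A sub by (auto intro: finite_subset)
    ultimately show ?thesis
      using psub by (intro sum_strict_mono2[where B = U' and b = u]) (auto intro: less_imp_le)
  qed
  show ?thesis
  proof (rule ccontr)
    assume "S \<noteq> S'"
    with nested consider "S \<subset> S'" | "S' \<subset> S" by blast
    then show False
    proof cases
      case 1
      then have "T' = {}" using excl(2) by blast
      then show False using less[OF 1 subsets(2)] nonneg[OF subsets(3)] balance by simp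
    next
      case 2
      then have "T = {}" using excl(1) by blast
      then show False using less[OF 2 subsets(1)] nonneg[OF subsets(4)] balance by simp
    qed
  qed
qed

lemma bracket_wins_on_path_eq_of_balance:
  fixes \<sigma> :: "'v \<Rightarrow> real"
  assumes T: "single_elim_tournament V E"
    and C: "is_bracket V E C" and C': "is_bracket V E C'"
    and cw: "(c, w) \<in> E\<^sup>*" and dw: "(d, w) \<in> E\<^sup>*" and cd: "c \<noteq> d"
    and \<sigma>: "\<forall>x \<in> E\<^sup>* `` {w}. \<sigma> x > 0"
    and balance: "sum \<sigma> {x \<in> E\<^sup>* `` {w}. C x = c} - sum \<sigma> {x \<in> E\<^sup>* `` {w}. C x = d}
      = sum \<sigma> {x \<in> E\<^sup>* `` {w}. C' x = c} - sum \<sigma> {x \<in> E\<^sup>* `` {w}. C' x = d}"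
  shows "{x \<in> E\<^sup>* `` {w}. C x = c} = {x \<in> E\<^sup>* `` {w}. C' x = c}"
proof (rule nested_eq_of_sum_diff_eq[OF _ \<sigma> _ _ _ _
      bracket_wins_above_comparable[OF T C C' cw]
      bracket_wins_above_exclusive[OF T C cw dw cd]
      bracket_wins_above_exclusive[OF T C' cw dw cd] balance])
  have "E\<^sup>* `` {w} \<subseteq> insert w V"
    using trancl_subset_Sigma[OF single_elim_tournament_edges_subset[OF T]]
    by (auto simp: rtrancl_eq_or_trancl)
  then show "finite (E\<^sup>* `` {w})"
    using T by (auto simp: single_elim_tournament_def intro: finite_subset)
qed auto

theorem lemma5p9:
  fixes V :: "'v set" and E :: "'v rel" and Bh B B' :: "'v \<Rightarrow> 'v"
    and \<sigma> :: "'v \<Rightarrow> real" and a b xa :: 'v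
  assumes T: "single_elim_tournament V E"
    and V2: "card V \<ge> 2"
    and Bh: "is_bracket V E Bh"
    and a: "a \<in> players V E" and b: "b \<in> players V E" and ab: "a \<noteq> b"
    and xa: "out_nbrs E a = {xa}"
    and bxa: "b \<in> Bh ` in_nbrs E xa"
    and B: "is_bracket V E B" and B': "is_bracket V E B'"
    and \<sigma>: "\<forall>x\<in>matches V E. \<sigma> x > 0"
    and sa: "score V E \<sigma> (bracket_with V E Bh a) B = score V E \<sigma> (bracket_with V E Bh a) B'"
    and sb: "score V E \<sigma> (bracket_with V E Bh b) B = score V E \<sigma> (bracket_with V E Bh b) B'"
  shows "\<forall>x\<in>matches V E. B x = a \<longleftrightarrow> B' x = a"
proof -
  define path where "path = E\<^sup>* `` {xa}"
  have axa: "(a, xa) \<in> E" using xa by (auto simp: out_nbrs_def)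
  obtain v where vxa: "(v, xa) \<in> E" and Bv: "Bh v = b" using bxa by (auto simp: in_nbrs_def)
  have "v \<in> V" using vxa single_elim_tournament_edges_subset[OF T] by blast
  then have b_xa: "(b, xa) \<in> E\<^sup>*"
    using bracket_in_players_below[OF T Bh] Bv vxa
    by (auto simp: players_below_def intro: rtrancl_into_rtrancl)
  have path_matches: "path \<subseteq> matches V E"
    using single_elim_tournament_path_in_matches[OF T axa] by (simp add: path_def)
  have Bha: "bracket_with V E Bh a = (\<lambda>x. if x \<in> path then a else Bh x)"
    using bracket_with_eq_override[OF T Bh a axa] Bh a by (simp add: is_bracket_def path_def)
  have Bhb: "bracket_with V E Bh b = (\<lambda>x. if x \<in> path then b else Bh x)"
    using bracket_with_eq_override[OF T Bh b vxa Bv] by (simp add: path_def)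
  have "sum \<sigma> {x \<in> path. B x = a} - sum \<sigma> {x \<in> path. B x = b}
      = sum \<sigma> {x \<in> path. B' x = a} - sum \<sigma> {x \<in> path. B' x = b}"
    using sa sb unfolding Bha Bhb
      score_override_split[OF single_elim_tournament_finite_matches[OF T] path_matches]
    by linarith
  then have won_a: "{x \<in> path. B x = a} = {x \<in> path. B' x = a}"
    using bracket_wins_on_path_eq_of_balance[OF T B B' r_into_rtrancl[OF axa] b_xa ab]
      \<sigma> path_matches
    unfolding path_def by blast
  have "C x = a \<longleftrightarrow> x \<in> path \<and> C x = a" if "is_bracket V E C" "x \<in> matches V E" for C x
    using bracket_winner_reaches_through_successor[OF T that] axa by (auto simp: path_def)
  then show ?thesis using won_a B B' by blast
qed

end
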